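(* Let $i,j,\ell$ be integers with $1\le i\le j\le\ell$. Suppose $\mathcal F\subset\binom{[n]}{\ell}$ is intersecting and $\tau(\mathcal F)\geq j$. Then $\Delta_i(\mathcal F)\leq \ell^{j-i}\Delta_j(\mathcal F)$.
   Context: A family is intersecting if any two members intersect. $\tau(\mathcal F)$ is the minimum size of a set meeting all members of $\mathcal F$. For $S\subset[n]$, $\mathcal F(S)=\{F\setminus S: S\subset F\in\mathcal F\}$, and $\Delta_i(\mathcal F)=\max_{S\in\binom{[n]}{i}}|\mathcal F(S)|$. *)

theory Defs
  imports Main
begin

definition intersecting :: "nat set set \<Rightarrow> bool" where
  "intersecting \<F> \<longleftrightarrow> (\<forall>A\<in>\<F>. \<forall>B\<in>\<F>. A \<inter> B \<noteq> {})"

definition tau :: "nat set set \<Rightarrow> nat" where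
  "tau \<F> = (LEAST t. \<exists>T. finite T \<and> card T = t \<and> (\<forall>F\<in>\<F>. T \<inter> F \<noteq> {}))"

definition link :: "nat set set \<Rightarrow> nat set \<Rightarrow> nat set set" where
  "link \<F> S = {F - S | F. F \<in> \<F> \<and> S \<subseteq> F}"

definition Delta :: "nat \<Rightarrow> nat \<Rightarrow> nat set set \<Rightarrow> nat" where
  "Delta n i \<F> = Max ((\<lambda>S. card (link \<F> S)) ` {S. S \<subseteq> {1..n} \<and> card S = i})"

end

theory Submission
  imports Defs
begin

text \<open>
  If a \<open>k\<close>-set \<open>S\<close> with \<open>k < \<tau>(\<F>)\<close> attains \<open>\<Delta>\<^sub>k(\<F>)\<close>, some \<open>F\<^sub>0 \<in> \<F>\<close> misses \<open>S\<close>.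
  Every member of \<open>\<F>\<close> containing \<open>S\<close> meets \<open>F\<^sub>0\<close>, so it contains one of the
  \<open>\<ell>\<close> sets \<open>S \<union> {x}\<close>, \<open>x \<in> F\<^sub>0\<close>, each of size \<open>k + 1\<close>. Hence
  \<open>\<Delta>\<^sub>k(\<F>) \<le> \<ell> \<Delta>\<^sub>k\<^sub>+\<^sub>1(\<F>)\<close>, and iterating for
  \<open>k = i, \<dots>, j - 1\<close> (all below \<open>\<tau>(\<F>)\<close>) gives the claim.
\<close>

lemma card_link_eq_card_supersets:
  "card (link \<F> S) = card {F\<in>\<F>. S \<subseteq> F}"
proof -
  have "link \<F> S = (\<lambda>F. F - S) ` {F\<in>\<F>. S \<subseteq> F}"
    unfolding link_def by auto
  moreover have "inj_on (\<lambda>F. F - S) {F\<in>\<F>. S \<subseteq> F}"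
    by (rule inj_onI) (metis Diff_partition mem_Collect_eq)
  ultimately show ?thesis by (simp add: card_image)
qed

lemma finite_subsets_with_card: "finite {S. S \<subseteq> {1..n::nat} \<and> card S = k}"
  by (rule finite_subset[of _ "Pow {1..n}"]) auto

lemma card_link_le_Delta:
  assumes "S \<subseteq> {1..n}" "card S = k"
  shows "card (link \<F> S) \<le> Delta n k \<F>"
  unfolding Delta_def using assms finite_subsets_with_card by (intro Max_ge) auto

lemma Delta_attained:
  assumes "k \<le> n"
  obtains S where "S \<subseteq> {1..n}" "card S = k" "Delta n k \<F> = card (link \<F> S)"
proof -
  obtain S where "S \<subseteq> {1..n}" "card S = k"
    using assms by (metis card_atLeastAtMost diff_Suc_1 obtain_subset_with_card_n)
  then have "{S. S \<subseteq> {1..n} \<and> card S = k} \<noteq> {}" by auto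
  then have "Delta n k \<F> \<in> (\<lambda>S. card (link \<F> S)) ` {S. S \<subseteq> {1..n} \<and> card S = k}"
    unfolding Delta_def using finite_subsets_with_card by (intro Max_in) auto
  then show ?thesis using that by (auto simp del: Collect_mem_eq)
qed

lemma tau_le_card_transversal:
  assumes "finite T" "\<forall>F\<in>\<F>. T \<inter> F \<noteq> {}"
  shows "tau \<F> \<le> card T"
  unfolding tau_def using assms by (intro Least_le) auto

lemma tau_empty: "tau {} = 0"
  using tau_le_card_transversal[of "{}" "{}"] by simp

lemma intersecting_tau_le_card:
  assumes "intersecting \<F>" "A \<in> \<F>" "finite A"
  shows "tau \<F> \<le> card A"
  using assms unfolding intersecting_def by (intro tau_le_card_transversal) auto

lemma Delta_le_mult_Delta_Suc:
  assumes uniform: "\<F> \<subseteq> {A. A \<subseteq> {1..n} \<and> card A = l}"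
    and inter: "intersecting \<F>" and k: "k < tau \<F>"
  shows "Delta n k \<F> \<le> l * Delta n (Suc k) \<F>"
proof -
  obtain A where A: "A \<in> \<F>"
    using k tau_empty by fastforce
  have A_sub: "A \<subseteq> {1..n}" and card_A: "card A = l"
    using A uniform by auto
  have "k < l"
    using k intersecting_tau_le_card[OF inter A] A_sub card_A finite_subset by fastforce
  moreover have "l \<le> n"
    using card_mono[OF finite_atLeastAtMost A_sub] card_A by simp
  ultimately have "k \<le> n" by simp
  then obtain S where S: "S \<subseteq> {1..n}" "card S = k" "Delta n k \<F> = card (link \<F> S)"
    by (rule Delta_attained)
  have finS: "finite S"
    using finite_subset[OF S(1)] by simp
  have "\<not> (\<forall>F\<in>\<F>. S \<inter> F \<noteq> {})"
    using tau_le_card_transversal[OF finS, of \<F>] k S(2) by linarith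
  then obtain F\<^sub>0 where F\<^sub>0: "F\<^sub>0 \<in> \<F>" "S \<inter> F\<^sub>0 = {}"
    by blast
  have F\<^sub>0_sub: "F\<^sub>0 \<subseteq> {1..n}" and card_F\<^sub>0: "card F\<^sub>0 = l"
    using uniform F\<^sub>0 by auto
  have fin_F\<^sub>0: "finite F\<^sub>0"
    using finite_subset[OF F\<^sub>0_sub] by simp
  have fin_\<F>: "finite \<F>"
    by (rule finite_subset[of _ "Pow {1..n}"]) (use uniform in auto)
  have cover: "{F\<in>\<F>. S \<subseteq> F} \<subseteq> (\<Union>x\<in>F\<^sub>0. {F\<in>\<F>. insert x S \<subseteq> F})"
  proof
    fix F assume F: "F \<in> {F\<in>\<F>. S \<subseteq> F}"
    then obtain x where "x \<in> F" "x \<in> F\<^sub>0"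
      using inter F\<^sub>0(1) unfolding intersecting_def by blast
    then show "F \<in> (\<Union>x\<in>F\<^sub>0. {F\<in>\<F>. insert x S \<subseteq> F})"
      using F by blast
  qed
  have "Delta n k \<F> = card {F\<in>\<F>. S \<subseteq> F}"
    using S(3) card_link_eq_card_supersets by simp
  also have "\<dots> \<le> card (\<Union>x\<in>F\<^sub>0. {F\<in>\<F>. insert x S \<subseteq> F})"
    using fin_\<F> fin_F\<^sub>0 cover by (intro card_mono) auto
  also have "\<dots> \<le> (\<Sum>x\<in>F\<^sub>0. card {F\<in>\<F>. insert x S \<subseteq> F})"
    by (rule card_UN_le[OF fin_F\<^sub>0])
  also have "\<dots> \<le> (\<Sum>x\<in>F\<^sub>0. Delta n (Suc k) \<F>)"
  proof (rule sum_mono)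
    fix x assume x: "x \<in> F\<^sub>0"
    then have "x \<notin> S" "insert x S \<subseteq> {1..n}"
      using F\<^sub>0(2) S(1) F\<^sub>0_sub by auto
    then have "card (insert x S) = Suc k" "insert x S \<subseteq> {1..n}"
      using finS S(2) by simp_all
    then show "card {F\<in>\<F>. insert x S \<subseteq> F} \<le> Delta n (Suc k) \<F>"
      using card_link_le_Delta card_link_eq_card_supersets by metis
  qed
  also have "\<dots> = l * Delta n (Suc k) \<F>"
    using card_F\<^sub>0 by simp
  finally show ?thesis .
qed

lemma Delta_le_power_mult_Delta:
  assumes uniform: "\<F> \<subseteq> {A. A \<subseteq> {1..n} \<and> card A = l}"
    and inter: "intersecting \<F>" and "i \<le> j" "j \<le> tau \<F>"
  shows "Delta n i \<F> \<le> l ^ (j - i) * Delta n j \<F>"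
  using \<open>i \<le> j\<close>
proof (induction i rule: inc_induct)
  case base
  show ?case by simp
next
  case (step k)
  have "Delta n k \<F> \<le> l * Delta n (Suc k) \<F>"
    using Delta_le_mult_Delta_Suc[OF uniform inter] step.hyps \<open>j \<le> tau \<F>\<close> by simp
  also have "\<dots> \<le> l * (l ^ (j - Suc k) * Delta n j \<F>)"
    using step.IH by simp
  also have "\<dots> = l ^ (j - k) * Delta n j \<F>"
    using step.hyps by (simp add: Suc_diff_Suc flip: power_Suc)
  finally show ?case .
qed

theorem proposition5p2:
  fixes n i j l :: nat and \<F> :: "nat set set"
  assumes "1 \<le> i" "i \<le> j" "j \<le> l"
    and "\<F> \<subseteq> {A. A \<subseteq> {1..n} \<and> card A = l}"
    and "intersecting \<F>"
    and "tau \<F> \<ge> j"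
  shows "Delta n i \<F> \<le> l ^ (j - i) * Delta n j \<F>"
  using Delta_le_power_mult_Delta assms by blast

end
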